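(* Write $t=e^u$ and $q=q_1$. Then, as formal Laurent series in $u$, $$\eta(q_1)\,\big(\delta(u)V\big)\big|_{\tau_2=\tau_3=\cdots=0}$$ equals the Laurent expansion at $u=0$ of $F(e^u)$, where $\delta(u):=u^{-1}+(2\pi i)^{-1}\sum_{n\ge1}\frac{u^n}{n!}\frac{\partial}{\partial\tau_n}$.
   Context: $q_r=e^{2\pi i\tau_r}$, $q_r^a=e^{2\pi ia\tau_r}$, $0<|q_1|<1$. $\xi(s)=\sum_{n\ge1}(n-\tfrac12)^{-s}=(2^s-1)\zeta(s)$ (analytically continued). $\eta(q)=q^{1/24}\prod_{m\ge1}(1-q^m)$. For a partition $\lambda$ with Frobenius coordinates $(m_1,\ldots,m_p|n_1,\ldots,n_p)$ ($p=\#\{i:\lambda_i\ge i\}$, $m_i=\lambda_i-i$, $n_i=\lambda'_i-i$), $p_r(\lambda)=\sum_j(m_j+\tfrac12)^r+(-1)^{r+1}(n_j+\tfrac12)^r$. $V(\tau_1,\tau_2,\ldots)=\prod_{r\ge1,\,r\text{ odd}}q_r^{-\xi(-r)}\sum_\lambda\prod_{r\ge1}q_r^{p_r(\lambda)}$. $\langle f\rangle_q=\sum_\lambda f(\lambda)q^{|\lambda|}/\sum_\lambda q^{|\lambda|}$. $F(t)=\langle\sum_{i\ge1}t^{\lambda_i-i+1/2}\rangle_{q_1}$, defined by the convergent series for $|t|>1$; since $\sum_{i\ge1}t^{-i+1/2}=(t^{1/2}-t^{-1/2})^{-1}$ there, $F$ is continued to a neighbourhood of $t=1$ by $F(t)=(t^{1/2}-t^{-1/2})^{-1}+\langle\sum_{i\ge1}(t^{\lambda_i-i+1/2}-t^{-i+1/2})\rangle_{q_1}$,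 with $t^{1/2}=e^{u/2}$. *)

theory Defs
  imports "HOL-Complex_Analysis.Complex_Analysis"
begin

text \<open>Bernoulli numbers via the generating function z/(e^z - 1) (convention B_1 = -1/2).\<close>
definition bernoulli_num :: "nat \<Rightarrow> real" where
  "bernoulli_num k = fact k * fps_nth (inverse (fps_shift 1 (fps_exp (1::real) - 1))) k"

text \<open>zeta(-r) = - B_(r+1)/(r+1) for r >= 1 (value of the analytic continuation).\<close>
definition zeta_neg :: "nat \<Rightarrow> real" where
  "zeta_neg r = - bernoulli_num (r + 1) / real (r + 1)"

definition xi_neg :: "nat \<Rightarrow> real" where
  "xi_neg r = (2 powr (- real r) - 1) * zeta_neg r"

definition partitions :: "nat list set" where
  "partitions = {xs. sorted_wrt (\<ge>) xs \<and> 0 \<notin> set xs}"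

definition part :: "nat list \<Rightarrow> nat \<Rightarrow> nat" where
  "part lam i = (if 1 \<le> i \<and> i \<le> length lam then lam ! (i - 1) else 0)"

definition conj_part :: "nat list \<Rightarrow> nat \<Rightarrow> nat" where
  "conj_part lam i = card {j \<in> {1..length lam}. part lam j \<ge> i}"

definition psize :: "nat list \<Rightarrow> nat" where
  "psize lam = sum_list lam"

definition frob_rank :: "nat list \<Rightarrow> nat" where
  "frob_rank lam = card {i \<in> {1..length lam}. part lam i \<ge> i}"

definition p_fun :: "nat \<Rightarrow> nat list \<Rightarrow> real" where
  "p_fun r lam = (\<Sum>j=1..frob_rank lam.
      (real (part lam j) - real j + 1/2) ^ r
      + (-1) ^ (r + 1) * (real (conj_part lam j) - real j + 1/2) ^ r)"

definition qexp :: "complex \<Rightarrow> complex" where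
  "qexp \<tau> = exp (2 * pi * \<i> * \<tau>)"

definition qbracket :: "complex \<Rightarrow> (nat list \<Rightarrow> complex) \<Rightarrow> complex" where
  "qbracket q f = (\<Sum>\<^sub>\<infinity>lam\<in>partitions. f lam * q ^ psize lam)
                  / (\<Sum>\<^sub>\<infinity>lam\<in>partitions. q ^ psize lam)"

text \<open>F(e^u) near u = 0, via the continuation in the context, with t^(1/2) = e^(u/2).\<close>
definition F_exp :: "complex \<Rightarrow> complex \<Rightarrow> complex" where
  "F_exp \<tau>1 u = 1 / (exp (u/2) - exp (-u/2))
     + qbracket (qexp \<tau>1) (\<lambda>lam. \<Sum>\<^sub>\<infinity>i\<in>{1::nat..}.
          exp (u * (of_nat (part lam i) - of_nat i + 1/2)) - exp (u * (- of_nat i + 1/2)))"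

definition eta :: "complex \<Rightarrow> complex" where
  "eta \<tau>1 = exp (2 * pi * \<i> * \<tau>1 / 24) * (\<Prod>m. (1 - qexp \<tau>1 ^ Suc m))"

text \<open>V(tau_1,0,0,...): all factors with r >= 2 equal e^0 = 1.\<close>
definition V1 :: "complex \<Rightarrow> complex" where
  "V1 \<tau>1 = (\<Sum>\<^sub>\<infinity>lam\<in>partitions.
     exp (2 * pi * \<i> * (- xi_neg 1) * \<tau>1) * exp (2 * pi * \<i> * p_fun 1 lam * \<tau>1))"

text \<open>For n >= 2, V(tau_1,0,..,0,eps,0,..) (eps in slot n) as a formal power series in eps:
  the summand for lambda is q_1^(-xi(-1)) q_1^(p_1) * e^(2 pi i eps (p_n - [n odd] xi(-n))),
  summed coefficientwise.\<close>
definition V_line :: "complex \<Rightarrow> nat \<Rightarrow> complex fps" where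
  "V_line \<tau>1 n = Abs_fps (\<lambda>k. \<Sum>\<^sub>\<infinity>lam\<in>partitions. fps_nth
      (fps_const (exp (2 * pi * \<i> * (- xi_neg 1) * \<tau>1) * exp (2 * pi * \<i> * p_fun 1 lam * \<tau>1))
       * fps_exp (2 * pi * \<i> * (p_fun n lam - (if odd n then xi_neg n else 0)))) k)"

text \<open>partial V / partial tau_n at (tau_1, 0, 0, ...).\<close>
definition dV :: "nat \<Rightarrow> complex \<Rightarrow> complex" where
  "dV n \<tau>1 = (if n = 1 then deriv V1 \<tau>1 else fps_nth (V_line \<tau>1 n) 1)"

text \<open>eta(q_1) * (delta(u) V)|_{tau_2=tau_3=...=0} as a formal Laurent series in u.\<close>
definition delta_V :: "complex \<Rightarrow> complex fls" where
  "delta_V \<tau>1 = fls_const (eta \<tau>1 * V1 \<tau>1) * fls_X_inv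
     + fps_to_fls (Abs_fps (\<lambda>n. if n = 0 then 0
          else eta \<tau>1 * dV n \<tau>1 / (2 * pi * \<i> * fact n)))"

end

theory Submission
  imports Defs
begin

(*
  Cutting the Young diagram of lambda into hooks and summing the content increments
  G(j - i) - G(j - i - 1) over its cells first by rows and then by hooks gives
  p_n(lambda) = sum_i ((lambda_i - i + 1/2)^n - (1/2 - i)^n).  Hence p_n(lambda)/n! is the
  u^n-coefficient of sum_i (t^(lambda_i - i + 1/2) - t^(-i + 1/2)), and since
  |p_n(lambda)| <= 2|lambda|(|lambda| + 1)^n the double series over lambda and n converges
  absolutely for small u: the q-bracket part of F(e^u) has Taylor coefficients <p_n>_q / n!.
  On the other side V(tau_1, 0, 0, ...) = q^(-xi(-1)) sum_lambda q^|lambda|, so Euler's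
  product and xi(-1) = 1/24 give eta V = 1 and eta dV/dtau_n = 2 pi i (<p_n>_q - [n odd] xi(-n)).
  The remaining terms are the Laurent expansion
  1/(e^(u/2) - e^(-u/2)) = 1/u - sum_(n odd) xi(-n) u^n/n!, which comes from
  u/(e^u - 1) = sum B_n u^n/n! and the oddness of e^(u/2) - e^(-u/2).
*)

section \<open>Frobenius coordinates as row sums\<close>

lemma part_antimono:
  assumes "lam \<in> partitions" "1 \<le> i" "i \<le> j"
  shows "part lam j \<le> part lam i"
proof (cases "j \<le> length lam \<and> i < j")
  case True
  then have "lam ! (j - 1) \<le> lam ! (i - 1)"
    using assms by (auto simp: partitions_def sorted_wrt_iff_nth_less)
  then show ?thesis using True assms by (simp add: part_def)
qed (use assms in \<open>auto simp: part_def\<close>)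

lemma index_bounds_if_part_ge:
  "1 \<le> k \<Longrightarrow> k \<le> part lam i \<Longrightarrow> 1 \<le> i \<and> i \<le> length lam"
  by (auto simp: part_def split: if_splits)

lemma downclosed_eq_atLeastAtMost_card:
  fixes S :: "nat set"
  assumes "finite S" "0 \<notin> S" "\<And>i j. j \<in> S \<Longrightarrow> 1 \<le> i \<Longrightarrow> i \<le> j \<Longrightarrow> i \<in> S"
  shows "S = {1..card S}"
proof (cases "S = {}")
  case False
  have "Max S \<in> S" using assms(1) False by simp
  have "S = {1..Max S}"
  proof
    show "S \<subseteq> {1..Max S}" using assms(1,2) by (auto simp: Suc_le_eq intro: gr0I)
    show "{1..Max S} \<subseteq> S" using assms(3) \<open>Max S \<in> S\<close> by auto
  qed
  moreover from this have "card S = Max S" by (metis card_atLeastAtMost diff_Suc_1)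
  ultimately show ?thesis by simp
qed simp

lemma le_conj_part_iff:
  assumes "lam \<in> partitions" "1 \<le> k" "1 \<le> i"
  shows "i \<le> conj_part lam k \<longleftrightarrow> k \<le> part lam i"
proof -
  define S where "S = {j \<in> {1..length lam}. k \<le> part lam j}"
  have "S = {1..card S}"
  proof (rule downclosed_eq_atLeastAtMost_card)
    fix i j assume "j \<in> S" "1 \<le> i" "i \<le> j"
    then show "i \<in> S" using part_antimono[OF assms(1), of i j] by (auto simp: S_def)
  qed (auto simp: S_def)
  then have "i \<le> conj_part lam k \<longleftrightarrow> i \<in> S"
    using assms(3) unfolding conj_part_def S_def[symmetric] by (metis atLeastAtMost_iff)
  also have "\<dots> \<longleftrightarrow> k \<le> part lam i"
    using assms index_bounds_if_part_ge[of k lam i] by (auto simp: S_def)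
  finally show ?thesis .
qed

lemma le_frob_rank_iff:
  assumes "lam \<in> partitions" "1 \<le> i"
  shows "i \<le> frob_rank lam \<longleftrightarrow> i \<le> part lam i"
proof -
  define S where "S = {j \<in> {1..length lam}. j \<le> part lam j}"
  have "S = {1..card S}"
  proof (rule downclosed_eq_atLeastAtMost_card)
    fix i j assume "j \<in> S" "1 \<le> i" "i \<le> j"
    then show "i \<in> S" using part_antimono[OF assms(1), of i j] by (auto simp: S_def)
  qed (auto simp: S_def)
  then have "i \<le> frob_rank lam \<longleftrightarrow> i \<in> S"
    using assms(2) unfolding frob_rank_def S_def[symmetric] by (metis atLeastAtMost_iff)
  also have "\<dots> \<longleftrightarrow> i \<le> part lam i"
    using assms index_bounds_if_part_ge[of i lam i] by (auto simp: S_def)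
  finally show ?thesis .
qed

definition young_diagram :: "nat list \<Rightarrow> (nat \<times> nat) set" where
  "young_diagram lam = Sigma {1..length lam} (\<lambda>i. {1..part lam i})"

lemma diagonal_young_diagram:
  assumes lam: "lam \<in> partitions"
  shows "case_prod min ` young_diagram lam = {1..frob_rank lam}"
proof (intro equalityI subsetI)
  fix k assume "k \<in> case_prod min ` young_diagram lam"
  then obtain i j where ij: "1 \<le> i" "1 \<le> j" "j \<le> part lam i" and k: "k = min i j"
    by (auto simp: young_diagram_def)
  have "k \<le> part lam k"
    using part_antimono[OF lam, of j i] ij k by (cases "i \<le> j") (auto simp: min_def)
  then show "k \<in> {1..frob_rank lam}"
    using le_frob_rank_iff[OF lam, of k] ij k by auto
next
  fix k assume k: "k \<in> {1..frob_rank lam}"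
  then have "k \<le> part lam k" using le_frob_rank_iff[OF lam, of k] by auto
  then have "(k, k) \<in> young_diagram lam"
    using k index_bounds_if_part_ge[of k lam k] by (auto simp: young_diagram_def)
  then show "k \<in> case_prod min ` young_diagram lam" by force
qed

lemma hook_decomposition:
  assumes lam: "lam \<in> partitions" and k: "k \<in> {1..frob_rank lam}"
  shows "{c \<in> young_diagram lam. case_prod min c = k}
    = (\<lambda>j. (k, j)) ` {k..part lam k} \<union> (\<lambda>i. (i, k)) ` {Suc k..conj_part lam k}"
proof (intro equalityI subsetI)
  fix c assume c: "c \<in> {c \<in> young_diagram lam. case_prod min c = k}"
  then obtain i j where "c = (i, j)" "1 \<le> i" "1 \<le> j" "j \<le> part lam i" "min i j = k"
    by (auto simp: young_diagram_def)
  then show "c \<in> (\<lambda>j. (k, j)) ` {k..part lam k} \<union> (\<lambda>i. (i, k)) ` {Suc k..conj_part lam k}"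
    using le_conj_part_iff[OF lam, of k i] k by (cases "i \<le> j") (auto simp: min_def)
next
  have kk: "k \<le> part lam k" using le_frob_rank_iff[OF lam, of k] k by auto
  fix c assume "c \<in> (\<lambda>j. (k, j)) ` {k..part lam k} \<union> (\<lambda>i. (i, k)) ` {Suc k..conj_part lam k}"
  then consider j where "c = (k, j)" "k \<le> j" "j \<le> part lam k"
    | i where "c = (i, k)" "k < i" "k \<le> part lam i"
    using le_conj_part_iff[OF lam, of k] k by fastforce
  then show "c \<in> {c \<in> young_diagram lam. case_prod min c = k}"
  proof cases
    case 1
    then show ?thesis using k kk index_bounds_if_part_ge[of k lam k] by (auto simp: young_diagram_def)
  next
    case 2
    then show ?thesis using k index_bounds_if_part_ge[of k lam] by (auto simp: young_diagram_def)
  qed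
qed

(* Cell (i, j) has content j - i; along a row or along a hook these weights telescope. *)
definition content_step :: "(int \<Rightarrow> 'a::ab_group_add) \<Rightarrow> nat \<times> nat \<Rightarrow> 'a" where
  "content_step G = (\<lambda>(i, j). G (int j - int i) - G (int j - int i - 1))"

lemma sum_content_step_row:
  "(\<Sum>j=1..part lam i. content_step G (i, j)) = G (int (part lam i) - int i) - G (- int i)"
  using sum_Suc_diff[of 1 "part lam i" "\<lambda>j. G (int j - int i - 1)"]
  by (simp add: content_step_def algebra_simps)

lemma sum_content_step_hook:
  assumes lam: "lam \<in> partitions" and k: "k \<in> {1..frob_rank lam}"
  shows "sum (content_step G) {c \<in> young_diagram lam. case_prod min c = k}
    = G (int (part lam k) - int k) - G (int k - 1 - int (conj_part lam k))"
proof -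
  have "k \<le> part lam k" using le_frob_rank_iff[OF lam, of k] k by auto
  then have "k \<le> conj_part lam k" using le_conj_part_iff[OF lam, of k k] k by auto
  have arm: "(\<Sum>j=k..part lam k. content_step G (k, j)) = G (int (part lam k) - int k) - G (-1)"
    using sum_Suc_diff[of k "part lam k" "\<lambda>j. G (int j - int k - 1)"] \<open>k \<le> part lam k\<close>
    by (simp add: content_step_def algebra_simps)
  have leg: "(\<Sum>i=Suc k..conj_part lam k. content_step G (i, k))
      = G (-1) - G (int k - 1 - int (conj_part lam k))"
    using sum_Suc_diff[of "Suc k" "conj_part lam k" "\<lambda>i. - G (int k - int i)"]
      \<open>k \<le> conj_part lam k\<close>
    by (simp add: content_step_def algebra_simps)
  show ?thesis
    unfolding hook_decomposition[OF lam k]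
    by (subst sum.union_disjoint) (auto simp: sum.reindex inj_on_def arm leg)
qed

lemma frobenius_telescoping:
  fixes G :: "int \<Rightarrow> 'a::ab_group_add"
  assumes lam: "lam \<in> partitions"
  shows "(\<Sum>i=1..length lam. G (int (part lam i) - int i) - G (- int i))
    = (\<Sum>k=1..frob_rank lam. G (int (part lam k) - int k) - G (int k - 1 - int (conj_part lam k)))"
proof -
  have "(\<Sum>i=1..length lam. G (int (part lam i) - int i) - G (- int i))
      = sum (content_step G) (young_diagram lam)"
    by (simp add: young_diagram_def sum.Sigma flip: sum_content_step_row)
  also have "\<dots> = (\<Sum>k\<in>case_prod min ` young_diagram lam.
      sum (content_step G) {c \<in> young_diagram lam. case_prod min c = k})"
    by (rule sum.image_gen) (simp add: young_diagram_def)
  also have "\<dots> = (\<Sum>k=1..frob_rank lam.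
      G (int (part lam k) - int k) - G (int k - 1 - int (conj_part lam k)))"
    by (simp add: diagonal_young_diagram[OF lam] sum_content_step_hook[OF lam])
  finally show ?thesis .
qed

lemma p_fun_eq_row_sum:
  assumes "lam \<in> partitions"
  shows "p_fun n lam = (\<Sum>i=1..length lam. (real (part lam i) - real i + 1/2) ^ n - (1/2 - real i) ^ n)"
proof -
  define G where "G = (\<lambda>x::int. (real_of_int x + 1/2) ^ n)"
  have conj: "G (int k - 1 - int (conj_part lam k)) = (-1) ^ n * (real (conj_part lam k) - real k + 1/2) ^ n"
    for k
  proof -
    have "real_of_int (int k - 1 - int (conj_part lam k)) + 1/2 = - (real (conj_part lam k) - real k + 1/2)"
      by simp
    then show ?thesis unfolding G_def by (metis power_minus)
  qed
  have "(\<Sum>i=1..length lam. (real (part lam i) - real i + 1/2) ^ n - (1/2 - real i) ^ n)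
      = (\<Sum>i=1..length lam. G (int (part lam i) - int i) - G (- int i))"
    by (simp add: G_def)
  also have "\<dots> = (\<Sum>k=1..frob_rank lam. G (int (part lam k) - int k) - G (int k - 1 - int (conj_part lam k)))"
    by (rule frobenius_telescoping[OF assms])
  also have "\<dots> = p_fun n lam"
    unfolding p_fun_def by (intro sum.cong refl) (simp only: conj, simp add: G_def)
  finally show ?thesis ..
qed

lemma length_le_psize: "lam \<in> partitions \<Longrightarrow> length lam \<le> psize lam"
proof -
  have "0 \<notin> set xs \<Longrightarrow> length xs \<le> sum_list xs" for xs :: "nat list"
    by (induction xs) auto
  then show "lam \<in> partitions \<Longrightarrow> length lam \<le> psize lam"
    by (simp add: partitions_def psize_def)
qed

lemma part_le_psize: "part lam i \<le> psize lam"
  by (auto simp: part_def psize_def intro!: member_le_sum_list)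

lemma sum_part_eq_psize: "(\<Sum>i=1..length lam. part lam i) = psize lam"
proof -
  have "(\<Sum>i=1..length lam. part lam i) = (\<Sum>i<length lam. lam ! i)"
    by (rule sum.reindex_bij_witness[of _ Suc "\<lambda>i. i - 1"]) (auto simp: part_def)
  also have "\<dots> = psize lam" by (simp add: psize_def sum_list_sum_nth atLeast0LessThan)
  finally show ?thesis .
qed

lemma p_fun_1_eq_psize: "lam \<in> partitions \<Longrightarrow> p_fun 1 lam = real (psize lam)"
  by (simp add: p_fun_eq_row_sum flip: sum_part_eq_psize)

lemma abs_p_fun_le:
  assumes lam: "lam \<in> partitions"
  shows "\<bar>p_fun n lam\<bar> \<le> 2 * real (psize lam) * (real (psize lam) + 1) ^ n"
proof -
  define s where "s = real (psize lam)"
  have row: "\<bar>(real (part lam i) - real i + 1/2) ^ n - (1/2 - real i) ^ n\<bar> \<le> 2 * (s + 1) ^ n"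
    if i: "i \<in> {1..length lam}" for i
  proof -
    have "real i \<le> s" "real (part lam i) \<le> s"
      using i length_le_psize[OF lam] part_le_psize[of lam i] by (auto simp: s_def)
    then have "\<bar>real (part lam i) - real i + 1/2\<bar> \<le> s + 1" "\<bar>1/2 - real i\<bar> \<le> s + 1"
      using i by auto
    then have "\<bar>real (part lam i) - real i + 1/2\<bar> ^ n + \<bar>1/2 - real i\<bar> ^ n \<le> (s + 1) ^ n + (s + 1) ^ n"
      by (intro add_mono power_mono) auto
    moreover have "\<bar>(real (part lam i) - real i + 1/2) ^ n - (1/2 - real i) ^ n\<bar>
        \<le> \<bar>real (part lam i) - real i + 1/2\<bar> ^ n + \<bar>1/2 - real i\<bar> ^ n"
      by (metis abs_triangle_ineq4 power_abs)
    ultimately show ?thesis by simp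
  qed
  have "\<bar>p_fun n lam\<bar> \<le> (\<Sum>i=1..length lam. 2 * (s + 1) ^ n)"
    unfolding p_fun_eq_row_sum[OF lam] using row by (intro order.trans[OF sum_abs sum_mono])
  also have "\<dots> \<le> s * (2 * (s + 1) ^ n)"
    using length_le_psize[OF lam] by (simp add: s_def mult_right_mono)
  finally show ?thesis by (simp add: s_def)
qed

section \<open>The generating function of partitions\<close>

lemma psize_Nil [simp]: "psize [] = 0"
  by (simp add: psize_def)

lemma psize_Cons [simp]: "psize (a # lam) = a + psize lam"
  by (simp add: psize_def)

definition bounded_partitions :: "nat \<Rightarrow> nat list set" where
  "bounded_partitions N = {lam \<in> partitions. \<forall>x\<in>set lam. x \<le> N}"

lemma bounded_partitions_subset: "bounded_partitions N \<subseteq> partitions"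
  by (auto simp: bounded_partitions_def)

lemma bounded_partitions_0: "bounded_partitions 0 = {[]}"
proof -
  have "lam = []" if "lam \<in> bounded_partitions 0" for lam
    using that by (cases lam) (auto simp: bounded_partitions_def partitions_def)
  then show ?thesis by (auto simp: bounded_partitions_def partitions_def)
qed

lemma bounded_partitions_Suc:
  "bounded_partitions (Suc N) = bounded_partitions N \<union> Cons (Suc N) ` bounded_partitions (Suc N)"
proof (intro equalityI subsetI)
  fix lam assume lam: "lam \<in> bounded_partitions (Suc N)"
  show "lam \<in> bounded_partitions N \<union> Cons (Suc N) ` bounded_partitions (Suc N)"
  proof (cases lam)
    case (Cons h t)
    then have "h = Suc N \<or> lam \<in> bounded_partitions N"
      using lam by (auto simp: bounded_partitions_def partitions_def)
    moreover have "t \<in> bounded_partitions (Suc N)"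
      using lam Cons by (auto simp: bounded_partitions_def partitions_def)
    ultimately show ?thesis using Cons by auto
  qed (use lam in \<open>auto simp: bounded_partitions_def\<close>)
qed (auto simp: bounded_partitions_def partitions_def)

lemma bounded_partitions_disjoint: "bounded_partitions N \<inter> Cons (Suc N) ` A = {}"
  by (auto simp: bounded_partitions_def)

lemma psize_gt_if_not_bounded:
  "lam \<in> partitions \<Longrightarrow> lam \<notin> bounded_partitions N \<Longrightarrow> N < psize lam"
  by (auto simp: bounded_partitions_def psize_def dest: member_le_sum_list)

lemma in_bounded_partitions_psize: "lam \<in> partitions \<Longrightarrow> lam \<in> bounded_partitions (psize lam)"
  by (auto simp: bounded_partitions_def psize_def member_le_sum_list)

lemma bounded_partitions_mono: "N \<le> M \<Longrightarrow> bounded_partitions N \<subseteq> bounded_partitions M"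
  by (auto simp: bounded_partitions_def)

lemma sum_bounded_partitions_Suc_split:
  assumes "finite F" "F \<subseteq> bounded_partitions (Suc N)"
  shows "sum f F = sum f (F \<inter> bounded_partitions N) + (\<Sum>t | Suc N # t \<in> F. f (Suc N # t))"
proof -
  have "F - bounded_partitions N = Cons (Suc N) ` {t. Suc N # t \<in> F}"
  proof
    show "F - bounded_partitions N \<subseteq> Cons (Suc N) ` {t. Suc N # t \<in> F}"
      using assms(2) bounded_partitions_Suc[of N] by blast
  qed (auto simp: bounded_partitions_def)
  then have "sum f (F - bounded_partitions N) = (\<Sum>t | Suc N # t \<in> F. f (Suc N # t))"
    by (simp add: sum.reindex)
  then show ?thesis using sum.Int_Diff[OF assms(1), of f "bounded_partitions N"] by simp
qed

lemma sum_power_psize_bounded_Suc_le: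
  fixes b B :: real
  assumes b: "0 \<le> b" "b < 1"
    and B: "\<And>F. finite F \<Longrightarrow> F \<subseteq> bounded_partitions N \<Longrightarrow> (\<Sum>lam\<in>F. b ^ psize lam) \<le> B"
  shows "finite F \<Longrightarrow> F \<subseteq> bounded_partitions (Suc N) \<Longrightarrow> \<forall>lam\<in>F. psize lam \<le> K
    \<Longrightarrow> (\<Sum>lam\<in>F. b ^ psize lam) \<le> B / (1 - b ^ Suc N)"
proof -
  have \<beta>: "0 \<le> b ^ Suc N" "b ^ Suc N < 1"
    using b power_strict_mono[of b 1 "Suc N"] by auto
  have "0 \<le> B" using B[of "{}"] by simp
  show "finite F \<Longrightarrow> F \<subseteq> bounded_partitions (Suc N) \<Longrightarrow> \<forall>lam\<in>F. psize lam \<le> K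
    \<Longrightarrow> (\<Sum>lam\<in>F. b ^ psize lam) \<le> B / (1 - b ^ Suc N)"
  proof (induction K arbitrary: F)
    case (0 F)
    then have "F \<subseteq> bounded_partitions N"
      using in_bounded_partitions_psize bounded_partitions_mono[of 0 N] bounded_partitions_subset
      by fastforce
    then have "(\<Sum>lam\<in>F. b ^ psize lam) \<le> B" using B "0.prems"(1) by blast
    also have "B \<le> B / (1 - b ^ Suc N)"
      using \<open>0 \<le> B\<close> \<beta> by (simp add: le_divide_eq mult_left_le)
    finally show ?case .
  next
    case (Suc K F)
    define T where "T = {t. Suc N # t \<in> F}"
    have "finite T"
      using finite_surj[OF Suc.prems(1), of T tl] by (force simp: T_def)
    moreover have "T \<subseteq> bounded_partitions (Suc N)" "\<forall>t\<in>T. psize t \<le> K"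
      using Suc.prems by (auto simp: T_def bounded_partitions_def partitions_def)
    ultimately have IH: "(\<Sum>t\<in>T. b ^ psize t) \<le> B / (1 - b ^ Suc N)"
      by (rule Suc.IH)
    have "(\<Sum>lam\<in>F. b ^ psize lam)
        = (\<Sum>lam\<in>F \<inter> bounded_partitions N. b ^ psize lam) + b ^ Suc N * (\<Sum>t\<in>T. b ^ psize t)"
      using sum_bounded_partitions_Suc_split[OF Suc.prems(1,2), of "\<lambda>lam. b ^ psize lam"]
      by (simp add: T_def sum_distrib_left flip: power_add del: power_Suc)
    also have "\<dots> \<le> B + b ^ Suc N * (B / (1 - b ^ Suc N))"
      using B[of "F \<inter> bounded_partitions N"] Suc.prems(1) IH \<beta>
      by (intro add_mono mult_left_mono) auto
    also have "\<dots> = B / (1 - b ^ Suc N)"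
      using \<beta> by (simp add: field_simps)
    finally show ?case .
  qed
qed

lemma sum_power_psize_bounded_le:
  fixes b :: real
  assumes b: "0 \<le> b" "b < 1"
  shows "finite F \<Longrightarrow> F \<subseteq> bounded_partitions N
    \<Longrightarrow> (\<Sum>lam\<in>F. b ^ psize lam) \<le> (\<Prod>m=1..N. 1 / (1 - b ^ m))"
proof (induction N arbitrary: F)
  case 0
  then have "F = {} \<or> F = {[]}" by (auto simp: bounded_partitions_0)
  then show ?case by auto
next
  case (Suc N)
  have "\<forall>lam\<in>F. psize lam \<le> sum psize F"
    using Suc.prems(1) by (simp add: member_le_sum)
  then have "(\<Sum>lam\<in>F. b ^ psize lam) \<le> (\<Prod>m=1..N. 1 / (1 - b ^ m)) / (1 - b ^ Suc N)"
    using Suc.IH Suc.prems by (intro sum_power_psize_bounded_Suc_le[OF b]) auto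
  also have "\<dots> = (\<Prod>m=1..Suc N. 1 / (1 - b ^ m))"
    by (simp add: prod.nat_ivl_Suc' divide_inverse mult.commute)
  finally show ?case .
qed

lemma prod_inverse_one_minus_power_le:
  fixes b :: real
  assumes b: "0 \<le> b" "b < 1"
  shows "(\<Prod>m=1..N. 1 / (1 - b ^ m)) \<le> exp (1 / (1 - b)\<^sup>2)"
proof -
  have factor: "1 / (1 - b ^ m) \<le> exp (b ^ m / (1 - b))" if "m \<ge> 1" for m
  proof -
    have "b ^ m \<le> b" using power_decreasing[of 1 m b] b that by simp
    then have "1 / (1 - b ^ m) = 1 + b ^ m / (1 - b ^ m)" using b by (simp add: field_simps)
    also have "\<dots> \<le> exp (b ^ m / (1 - b ^ m))" by (rule exp_ge_add_one_self)
    also have "\<dots> \<le> exp (b ^ m / (1 - b))"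
      using b \<open>b ^ m \<le> b\<close> by (simp add: divide_left_mono)
    finally show ?thesis .
  qed
  have "(\<Prod>m=1..N. 1 / (1 - b ^ m)) \<le> (\<Prod>m=1..N. exp (b ^ m / (1 - b)))"
    using b factor power_strict_mono[of b 1] by (intro prod_mono) (auto simp: less_imp_le)
  also have "\<dots> = exp ((\<Sum>m=1..N. b ^ m) / (1 - b))"
    by (simp add: exp_sum sum_divide_distrib)
  also have "(\<Sum>m=1..N. b ^ m) \<le> (\<Sum>m<Suc N. b ^ m)"
    using b by (intro sum_mono2) auto
  also have "\<dots> \<le> 1 / (1 - b)"
    using b sum_gp_strict[of b "Suc N"] by (simp add: divide_right_mono del: sum.lessThan_Suc)
  finally show ?thesis
    using b by (simp add: power2_eq_square divide_right_mono)
qed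

lemma summable_on_power_psize_real:
  fixes b :: real
  assumes "0 \<le> b" "b < 1"
  shows "(\<lambda>lam. b ^ psize lam) summable_on partitions"
proof (rule nonneg_bdd_above_summable_on)
  show "bdd_above (sum (\<lambda>lam. b ^ psize lam) ` {F. F \<subseteq> partitions \<and> finite F})"
  proof (intro bdd_aboveI, safe)
    fix F assume F: "F \<subseteq> partitions" "finite F"
    have "lam \<in> bounded_partitions (sum psize F)" if "lam \<in> F" for lam
    proof -
      have "psize lam \<le> sum psize F" using that F(2) by (simp add: member_le_sum)
      then show ?thesis
        using bounded_partitions_mono in_bounded_partitions_psize F(1) that by blast
    qed
    then have "F \<subseteq> bounded_partitions (sum psize F)" by blast
    then show "(\<Sum>lam\<in>F. b ^ psize lam) \<le> exp (1 / (1 - b)\<^sup>2)"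
      using sum_power_psize_bounded_le[OF assms F(2)] prod_inverse_one_minus_power_le[OF assms]
      by (meson order.trans)
  qed
qed (use assms in simp)

lemma summable_on_power_psize:
  fixes q :: complex
  assumes "norm q < 1" "A \<subseteq> partitions"
  shows "(\<lambda>lam. q ^ psize lam) summable_on A"
proof -
  have "(\<lambda>lam. norm q ^ psize lam) summable_on A"
    using summable_on_power_psize_real[of "norm q"] assms summable_on_subset by auto
  then show ?thesis by (simp add: summable_on_iff_abs_summable_on_complex norm_power)
qed

definition partition_gf :: "complex \<Rightarrow> complex" where
  "partition_gf q = (\<Sum>\<^sub>\<infinity>lam\<in>partitions. q ^ psize lam)"

definition bounded_partition_gf :: "complex \<Rightarrow> nat \<Rightarrow> complex" where
  "bounded_partition_gf q N = (\<Sum>\<^sub>\<infinity>lam\<in>bounded_partitions N. q ^ psize lam)"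

lemma bounded_partition_gf_Suc:
  assumes q: "norm q < 1"
  shows "bounded_partition_gf q (Suc N)
    = bounded_partition_gf q N + q ^ Suc N * bounded_partition_gf q (Suc N)"
proof -
  have tail: "(\<lambda>lam. q ^ psize lam) summable_on Cons (Suc N) ` bounded_partitions (Suc N)"
    using summable_on_power_psize[OF q] bounded_partitions_Suc[of N] bounded_partitions_subset
    by blast
  have "bounded_partition_gf q (Suc N) = bounded_partition_gf q N
      + (\<Sum>\<^sub>\<infinity>lam\<in>Cons (Suc N) ` bounded_partitions (Suc N). q ^ psize lam)"
    unfolding bounded_partition_gf_def
    by (subst bounded_partitions_Suc)
       (rule infsum_Un_disjoint[OF summable_on_power_psize[OF q bounded_partitions_subset] tail
         bounded_partitions_disjoint])
  also have "(\<Sum>\<^sub>\<infinity>lam\<in>Cons (Suc N) ` bounded_partitions (Suc N). q ^ psize lam)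
      = (\<Sum>\<^sub>\<infinity>t\<in>bounded_partitions (Suc N). q ^ Suc N * q ^ psize t)"
    by (subst infsum_reindex) (simp_all add: o_def power_add mult.assoc)
  also have "\<dots> = q ^ Suc N * bounded_partition_gf q (Suc N)"
    unfolding bounded_partition_gf_def by (rule infsum_cmult_right')
  finally show ?thesis .
qed

lemma bounded_partition_gf_mult_prod:
  assumes q: "norm q < 1"
  shows "bounded_partition_gf q N * (\<Prod>m=1..N. 1 - q ^ m) = 1"
proof (induction N)
  case 0
  then show ?case by (simp add: bounded_partition_gf_def bounded_partitions_0)
next
  case (Suc N)
  have step: "bounded_partition_gf q (Suc N) * (1 - q ^ Suc N) = bounded_partition_gf q N"
    using bounded_partition_gf_Suc[OF q, of N] by (simp add: algebra_simps)
  have "bounded_partition_gf q (Suc N) * (\<Prod>m=1..Suc N. 1 - q ^ m)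
      = (bounded_partition_gf q (Suc N) * (1 - q ^ Suc N)) * (\<Prod>m=1..N. 1 - q ^ m)"
    by (simp add: prod.nat_ivl_Suc' ac_simps del: power_Suc)
  then show ?case by (simp only: step Suc.IH)
qed

lemma norm_bounded_partition_gf_diff_le:
  assumes c: "0 \<le> c" "c < 1" and q: "norm q = c * c"
  shows "norm (bounded_partition_gf q N - partition_gf q)
    \<le> c ^ N * (\<Sum>\<^sub>\<infinity>lam\<in>partitions. c ^ psize lam)"
proof -
  let ?T = "partitions - bounded_partitions N"
  have "norm q < 1" using c q mult_left_le[of c c] by linarith
  have sc: "(\<lambda>lam. c ^ psize lam) summable_on partitions"
    using summable_on_power_psize_real[OF c] .
  have "norm (bounded_partition_gf q N - partition_gf q) = norm (\<Sum>\<^sub>\<infinity>lam\<in>?T. q ^ psize lam)"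
    unfolding bounded_partition_gf_def partition_gf_def
    by (subst infsum_Diff)
       (simp_all add: norm_minus_commute summable_on_power_psize[OF \<open>norm q < 1\<close>]
         bounded_partitions_subset)
  also have "\<dots> \<le> (\<Sum>\<^sub>\<infinity>lam\<in>?T. c ^ N * c ^ psize lam)"
  proof (rule norm_infsum_le)
    show "((\<lambda>lam. q ^ psize lam) has_sum (\<Sum>\<^sub>\<infinity>lam\<in>?T. q ^ psize lam)) ?T"
      using summable_on_power_psize[OF \<open>norm q < 1\<close>] by auto
    show "((\<lambda>lam. c ^ N * c ^ psize lam) has_sum (\<Sum>\<^sub>\<infinity>lam\<in>?T. c ^ N * c ^ psize lam)) ?T"
      by (intro has_sum_infsum summable_on_cmult_right summable_on_subset[OF sc]) auto
    fix lam assume "lam \<in> ?T"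
    then have "N < psize lam" using psize_gt_if_not_bounded by blast
    then have "c ^ psize lam \<le> c ^ N" using c by (intro power_decreasing) auto
    then show "norm (q ^ psize lam) \<le> c ^ N * c ^ psize lam"
      using c q by (simp add: norm_power power_mult_distrib mult_right_mono)
  qed
  also have "\<dots> \<le> c ^ N * (\<Sum>\<^sub>\<infinity>lam\<in>partitions. c ^ psize lam)"
    unfolding infsum_cmult_right' using c
    by (intro mult_left_mono infsum_mono_neutral summable_on_subset[OF sc] sc) auto
  finally show ?thesis .
qed

lemma bounded_partition_gf_tendsto:
  assumes q: "norm q < 1"
  shows "bounded_partition_gf q \<longlonglongrightarrow> partition_gf q"
proof -
  define c where "c = sqrt (norm q)"
  have c: "0 \<le> c" "c < 1" "norm q = c * c"
    using q by (auto simp: c_def)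
  have lim0: "(\<lambda>N. c ^ N * (\<Sum>\<^sub>\<infinity>lam\<in>partitions. c ^ psize lam)) \<longlonglongrightarrow> 0"
    using c by (intro tendsto_mult_left_zero LIMSEQ_power_zero) auto
  have "(\<lambda>N. bounded_partition_gf q N - partition_gf q) \<longlonglongrightarrow> 0"
    by (intro Lim_null_comparison[OF always_eventually lim0] allI norm_bounded_partition_gf_diff_le[OF c])
  then show ?thesis by (rule LIM_zero_cancel)
qed

lemma partition_gf_euler_product:
  assumes q: "norm q < 1"
  shows "partition_gf q * (\<Prod>m. 1 - q ^ Suc m) = 1"
proof -
  have "summable (\<lambda>m. norm ((1 - q ^ Suc m) - 1))"
    using q by (simp add: norm_mult norm_power summable_mult summable_geometric)
  then have "convergent_prod (\<lambda>m. 1 - q ^ Suc m)"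
    by (intro abs_convergent_prod_imp_convergent_prod summable_imp_abs_convergent_prod)
  then have "(\<lambda>n. bounded_partition_gf q (Suc n) * (\<Prod>i\<le>n. 1 - q ^ Suc i))
      \<longlonglongrightarrow> partition_gf q * (\<Prod>m. 1 - q ^ Suc m)"
    using bounded_partition_gf_tendsto[OF q]
    by (intro tendsto_mult convergent_prod_LIMSEQ LIMSEQ_Suc)
  moreover have "bounded_partition_gf q (Suc n) * (\<Prod>i\<le>n. 1 - q ^ Suc i) = 1" for n
    using bounded_partition_gf_mult_prod[OF q, of "Suc n"]
    by (simp only: One_nat_def prod.atLeast1_atMost_eq lessThan_Suc_atMost)
  ultimately have "(\<lambda>n. 1) \<longlonglongrightarrow> partition_gf q * (\<Prod>m. 1 - q ^ Suc m)"
    by simp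
  then show ?thesis using LIMSEQ_unique[OF tendsto_const] by metis
qed

section \<open>The q-bracket part of F\<close>

lemma summable_on_psize_power_exp:
  fixes a R :: real
  assumes a: "0 \<le> a" and R: "0 < R" and aR: "a * exp (2 * R) < 1"
  shows "(\<lambda>lam. real (psize lam) * a ^ psize lam * exp (R * real (psize lam))) summable_on partitions"
proof (rule summable_on_comparison_test)
  show "(\<lambda>lam. inverse R * (a * exp (2 * R)) ^ psize lam) summable_on partitions"
    using a aR by (intro summable_on_cmult_right summable_on_power_psize_real) auto
  fix lam
  define s where "s = real (psize lam)"
  have "R * s \<le> exp (R * s)"
    using exp_ge_add_one_self[of "R * s"] by linarith
  then have "s \<le> exp (R * s) / R" using R by (simp add: field_simps)
  have exp2: "exp (R * s) * exp (R * s) = exp (2 * R) ^ psize lam"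
    by (simp add: s_def algebra_simps flip: exp_add exp_of_nat_mult)
  have "s * a ^ psize lam * exp (R * s) \<le> exp (R * s) / R * a ^ psize lam * exp (R * s)"
    using \<open>s \<le> exp (R * s) / R\<close> a by (intro mult_right_mono) auto
  also have "\<dots> = inverse R * (a * exp (2 * R)) ^ psize lam"
    using exp2 by (simp add: power_mult_distrib divide_inverse mult_ac)
  finally show "real (psize lam) * a ^ psize lam * exp (R * real (psize lam))
      \<le> inverse R * (a * exp (2 * R)) ^ psize lam"
    by (simp add: s_def)
qed (use a in simp)

(* Its rows sum to row_exp_sum u lam * q^|lam|, its columns to u^n/n! * p_fun_gf q n. *)
definition bracket_term :: "complex \<Rightarrow> complex \<Rightarrow> nat list \<times> nat \<Rightarrow> complex" where
  "bracket_term q u = (\<lambda>(lam, n). u ^ n / fact n * of_real (p_fun n lam) * q ^ psize lam)"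

lemma summable_on_bracket_term:
  assumes R: "0 < R" and qR: "norm q * exp (2 * R) < 1" and u: "norm u \<le> R"
  shows "bracket_term q u summable_on partitions \<times> UNIV"
proof -
  define g where "g = (\<lambda>(lam, n). 2 * real (psize lam) * norm q ^ psize lam
      * (R * (real (psize lam) + 1)) ^ n / fact n)"
  have fibre: "((\<lambda>n. g (lam, n)) has_sum
      2 * exp R * (real (psize lam) * norm q ^ psize lam * exp (R * real (psize lam)))) UNIV"
    for lam
  proof (rule sums_nonneg_imp_has_sum)
    have "(\<lambda>n. (R * (real (psize lam) + 1)) ^ n / fact n) sums exp (R * (real (psize lam) + 1))"
      using exp_converges[of "R * (real (psize lam) + 1)"] by (simp add: divide_inverse mult.commute)
    from sums_mult[OF this, of "2 * real (psize lam) * norm q ^ psize lam"]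
    show "(\<lambda>n. g (lam, n)) sums
        (2 * exp R * (real (psize lam) * norm q ^ psize lam * exp (R * real (psize lam))))"
      by (simp add: g_def distrib_left exp_add mult_ac)
  qed (use R in \<open>simp add: g_def\<close>)
  have g: "g summable_on partitions \<times> UNIV"
    using fibre summable_on_psize_power_exp[OF _ R qR] R
    by (intro summable_on_SigmaI[where g = "\<lambda>lam. 2 * exp R * _ lam"] summable_on_cmult_right)
       (auto simp: g_def)
  have bound: "norm (bracket_term q u x) \<le> g x" if "x \<in> partitions \<times> UNIV" for x
  proof -
    obtain lam n where x: "x = (lam, n)" by (cases x)
    with that have lam: "lam \<in> partitions" by simp
    have "norm (bracket_term q u x) = norm u ^ n / fact n * \<bar>p_fun n lam\<bar> * norm q ^ psize lam"
      by (simp add: bracket_term_def x norm_mult norm_divide norm_power)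
    also have "\<dots> \<le> R ^ n / fact n * (2 * real (psize lam) * (real (psize lam) + 1) ^ n)
        * norm q ^ psize lam"
      using abs_p_fun_le[OF lam, of n] u R
      by (intro mult_right_mono mult_mono divide_right_mono power_mono) auto
    also have "\<dots> = g x"
      by (simp add: g_def x power_mult_distrib)
    finally show ?thesis .
  qed
  have "(\<lambda>x. norm (bracket_term q u x)) summable_on partitions \<times> UNIV"
    by (rule summable_on_comparison_test[OF g bound norm_ge_zero])
  then show ?thesis by (simp add: summable_on_iff_abs_summable_on_complex)
qed

definition row_exp_sum :: "complex \<Rightarrow> nat list \<Rightarrow> complex" where
  "row_exp_sum u lam = (\<Sum>\<^sub>\<infinity>i\<in>{1::nat..}.
     exp (u * (of_nat (part lam i) - of_nat i + 1/2)) - exp (u * (- of_nat i + 1/2)))"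

lemma row_exp_sum_sums:
  assumes lam: "lam \<in> partitions"
  shows "(\<lambda>n. u ^ n / fact n * of_real (p_fun n lam)) sums row_exp_sum u lam"
proof -
  define X where "X i = (of_nat (part lam i) - of_nat i + 1/2 :: complex)" for i
  define Y where "Y i = (- of_nat i + 1/2 :: complex)" for i
  have "row_exp_sum u lam = (\<Sum>\<^sub>\<infinity>i\<in>{1..length lam}. exp (u * X i) - exp (u * Y i))"
    unfolding row_exp_sum_def X_def Y_def by (rule infsum_cong_neutral) (auto simp: part_def)
  also have "\<dots> = (\<Sum>i=1..length lam. exp (u * X i) - exp (u * Y i))"
    by simp
  finally have row: "row_exp_sum u lam = (\<Sum>i=1..length lam. exp (u * X i) - exp (u * Y i))" .
  have "(\<lambda>n. (u * z) ^ n / fact n) sums exp (u * z)" for z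
    using exp_converges[of "u * z"] by (simp add: scaleR_conv_of_real divide_inverse mult.commute)
  then have "(\<lambda>n. \<Sum>i=1..length lam. (u * X i) ^ n / fact n - (u * Y i) ^ n / fact n) sums row_exp_sum u lam"
    unfolding row by (intro sums_sum sums_diff)
  moreover have "(\<Sum>i=1..length lam. (u * X i) ^ n / fact n - (u * Y i) ^ n / fact n)
      = u ^ n / fact n * of_real (p_fun n lam)" for n
  proof -
    have "(\<Sum>i=1..length lam. (u * X i) ^ n / fact n - (u * Y i) ^ n / fact n)
        = u ^ n / fact n * (\<Sum>i=1..length lam. X i ^ n - Y i ^ n)"
      by (simp add: sum_distrib_left power_mult_distrib diff_divide_distrib right_diff_distrib)
    also have "(\<Sum>i=1..length lam. X i ^ n - Y i ^ n) = of_real (p_fun n lam)"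
      by (simp add: p_fun_eq_row_sum[OF lam] X_def Y_def)
    finally show ?thesis .
  qed
  ultimately show ?thesis by simp
qed

definition p_fun_gf :: "complex \<Rightarrow> nat \<Rightarrow> complex" where
  "p_fun_gf q n = (\<Sum>\<^sub>\<infinity>lam\<in>partitions. of_real (p_fun n lam) * q ^ psize lam)"

lemma bracket_numerator_sums:
  assumes R: "0 < R" and qR: "norm q * exp (2 * R) < 1" and u: "norm u \<le> R"
  shows "(\<lambda>n. u ^ n / fact n * p_fun_gf q n) sums (\<Sum>\<^sub>\<infinity>lam\<in>partitions. row_exp_sum u lam * q ^ psize lam)"
proof -
  obtain H where H: "(bracket_term q u has_sum H) (partitions \<times> UNIV)"
    using summable_on_bracket_term[OF R qR u] has_sum_infsum by blast
  have "((\<lambda>n. bracket_term q u (lam, n)) has_sum (row_exp_sum u lam * q ^ psize lam)) UNIV"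
    if lam: "lam \<in> partitions" for lam
  proof -
    have "(\<lambda>n. bracket_term q u (lam, n)) summable_on UNIV"
      using summable_on_SigmaD1[of "\<lambda>lam n. bracket_term q u (lam, n)" partitions "\<lambda>_. UNIV" lam] H lam
      by (auto simp: summable_on_def)
    moreover have "(\<lambda>n. bracket_term q u (lam, n)) sums (row_exp_sum u lam * q ^ psize lam)"
      unfolding bracket_term_def using sums_mult2[OF row_exp_sum_sums[OF lam]] by simp
    ultimately show ?thesis
      by (metis has_sum_imp_sums has_sum_infsum sums_unique2)
  qed
  then have "((\<lambda>lam. row_exp_sum u lam * q ^ psize lam) has_sum H) partitions"
    by (rule has_sum_SigmaD[OF H])
  moreover have H': "((\<lambda>(n, lam). bracket_term q u (lam, n)) has_sum H) (UNIV \<times> partitions)"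
    using H by (subst (asm) has_sum_swap) simp
  have "((\<lambda>lam. bracket_term q u (lam, n)) has_sum (u ^ n / fact n * p_fun_gf q n)) partitions" for n
  proof -
    have "(\<lambda>lam. bracket_term q u (lam, n)) summable_on partitions"
      using summable_on_SigmaD1[of "\<lambda>n lam. bracket_term q u (lam, n)" UNIV "\<lambda>_. partitions" n] H'
      by (auto simp: summable_on_def)
    moreover have "infsum (\<lambda>lam. bracket_term q u (lam, n)) partitions = u ^ n / fact n * p_fun_gf q n"
      unfolding p_fun_gf_def bracket_term_def by (simp add: mult.assoc flip: infsum_cmult_right')
    ultimately show ?thesis by (metis has_sum_infsum)
  qed
  then have "((\<lambda>n. u ^ n / fact n * p_fun_gf q n) has_sum H) UNIV"
    using has_sum_SigmaD[OF H'[unfolded case_prod_beta']] by simp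
  ultimately show ?thesis
    using has_sum_imp_sums infsumI by metis
qed

lemma bracket_radiusE:
  fixes q :: complex
  assumes "norm q < 1"
  obtains R where "0 < R" "norm q * exp (2 * R) < 1"
proof -
  have "((\<lambda>R. norm q * exp (2 * R)) \<longlongrightarrow> norm q * exp (2 * 0)) (at_right 0)"
    by (intro tendsto_intros)
  then have "eventually (\<lambda>R. norm q * exp (2 * R) < 1) (at_right 0)"
    using assms by (intro order_tendstoD(2)) auto
  then obtain b :: real where b: "0 < b" "\<And>R. 0 < R \<Longrightarrow> R < b \<Longrightarrow> norm q * exp (2 * R) < 1"
    unfolding eventually_at_right_field by blast
  then show ?thesis using that[of "b / 2"] b(2)[of "b / 2"] by simp
qed

lemma summable_on_p_fun_power_psize:
  fixes q :: complex
  assumes q: "norm q < 1"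
  shows "(\<lambda>lam. of_real (p_fun n lam) * q ^ psize lam) summable_on partitions"
proof -
  obtain R where R: "0 < R" "norm q * exp (2 * R) < 1"
    using bracket_radiusE[OF q] .
  have "(\<lambda>(n, lam). bracket_term q (of_real R) (lam, n)) summable_on UNIV \<times> partitions"
    using summable_on_bracket_term[OF R, of "of_real R"] R(1)
    by (subst summable_on_swap) simp
  then have "(\<lambda>lam. of_real R ^ n / fact n * (of_real (p_fun n lam) * q ^ psize lam)) summable_on partitions"
    using summable_on_SigmaD1[of "\<lambda>n lam. bracket_term q (of_real R) (lam, n)" UNIV "\<lambda>_. partitions" n]
    by (simp add: bracket_term_def mult.assoc)
  moreover have "(of_real R ^ n / fact n :: complex) \<noteq> 0" using R by simp
  ultimately show ?thesis using summable_on_cmult_right' by blast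
qed

definition bracket_fps :: "complex \<Rightarrow> complex fps" where
  "bracket_fps q = Abs_fps (\<lambda>n. p_fun_gf q n / (fact n * partition_gf q))"

lemma bracket_fps_sums:
  assumes R: "0 < R" "norm q * exp (2 * R) < 1" and u: "norm u \<le> R"
  shows "(\<lambda>n. fps_nth (bracket_fps q) n * u ^ n) sums qbracket q (row_exp_sum u)"
proof -
  have "(\<lambda>n. u ^ n / fact n * p_fun_gf q n / partition_gf q)
      sums ((\<Sum>\<^sub>\<infinity>lam\<in>partitions. row_exp_sum u lam * q ^ psize lam) / partition_gf q)"
    by (rule sums_divide[OF bracket_numerator_sums[OF R u]])
  then show ?thesis
    by (simp add: bracket_fps_def qbracket_def partition_gf_def divide_inverse mult_ac)
qed

lemma has_fps_expansion_qbracket: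
  assumes q: "norm q < 1"
  shows "(\<lambda>u. qbracket q (row_exp_sum u)) has_fps_expansion bracket_fps q"
proof -
  obtain R where R: "0 < R" "norm q * exp (2 * R) < 1"
    using bracket_radiusE[OF q] .
  have "summable (\<lambda>n. fps_nth (bracket_fps q) n * of_real R ^ n)"
    using bracket_fps_sums[OF R, of "of_real R"] R(1) sums_summable by auto
  then have "ereal R \<le> fps_conv_radius (bracket_fps q)"
    using conv_radius_geI[of "fps_nth (bracket_fps q)" "of_real R"] R(1)
    by (simp add: fps_conv_radius_def)
  then have "0 < fps_conv_radius (bracket_fps q)"
    using R(1) by (simp add: less_le_trans[of 0 "ereal R"])
  moreover have "eventually (\<lambda>u. eval_fps (bracket_fps q) u = qbracket q (row_exp_sum u)) (nhds 0)"
    using eventually_nhds_ball[OF R(1), of 0]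
  proof eventually_elim
    case (elim u)
    then show ?case
      using bracket_fps_sums[OF R, of u] by (simp add: eval_fps_def sums_iff dist_norm)
  qed
  ultimately show ?thesis by (simp add: has_fps_expansion_def)
qed

section \<open>The Laurent expansion of 1 / (e^(u/2) - e^(-u/2))\<close>

definition bernoulli_fps :: "complex fps" where
  "bernoulli_fps = inverse (fps_shift 1 (fps_exp 1 - 1))"

lemma bernoulli_fps_mult: "bernoulli_fps * (fps_exp 1 - 1) = fps_X"
proof -
  have "fps_exp 1 - 1 = fps_shift 1 (fps_exp 1 - 1) * (fps_X :: complex fps)"
    by (rule fps_ext) simp
  moreover have "bernoulli_fps * fps_shift 1 (fps_exp 1 - 1) = 1"
    unfolding bernoulli_fps_def by (rule inverse_mult_eq_1) simp
  ultimately show ?thesis by (metis mult.assoc mult_1)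
qed

lemma fps_nth_bernoulli_fps: "fps_nth bernoulli_fps k = of_real (bernoulli_num k / fact k)"
proof -
  define D :: "real fps" where "D = fps_shift 1 (fps_exp 1 - 1)"
  have "D * inverse D = 1"
    unfolding D_def by (rule inverse_mult_eq_1') simp
  have "fps_shift 1 (fps_exp 1 - 1) * Abs_fps (\<lambda>k. of_real (fps_nth (inverse D) k)) = (1 :: complex fps)"
  proof (rule fps_ext)
    fix n
    have "fps_nth (fps_shift 1 (fps_exp 1 - 1) * Abs_fps (\<lambda>k. of_real (fps_nth (inverse D) k))) n
        = (of_real (fps_nth (D * inverse D) n) :: complex)"
      by (simp add: fps_mult_nth D_def)
    then show "fps_nth (fps_shift 1 (fps_exp 1 - 1) * Abs_fps (\<lambda>k. of_real (fps_nth (inverse D) k))) n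
        = fps_nth (1 :: complex fps) n"
      by (simp add: \<open>D * inverse D = 1\<close>)
  qed
  then have "bernoulli_fps = Abs_fps (\<lambda>k. of_real (fps_nth (inverse D) k))"
    unfolding bernoulli_fps_def by (rule fps_inverse_unique)
  then have "fps_nth bernoulli_fps k = of_real (fps_nth (inverse D) k)"
    by (metis fps_nth_Abs_fps)
  then show ?thesis by (simp add: bernoulli_num_def D_def)
qed

definition exp_half_diff_fps :: "complex fps" where
  "exp_half_diff_fps = fps_exp (1/2) - fps_exp (-1/2)"

(* The exponential generating function of B_n(1/2) = (2^(1-n) - 1) B_n. *)
definition bernoulli_half_fps :: "complex fps" where
  "bernoulli_half_fps = 2 * (bernoulli_fps oo (fps_const (1/2) * fps_X)) - bernoulli_fps"

lemma bernoulli_half_fps_mult: "bernoulli_half_fps * exp_half_diff_fps = fps_X"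
proof -
  let ?h = "fps_exp (1/2) :: complex fps" and ?i = "fps_exp (-1/2) :: complex fps"
  have f1: "exp_half_diff_fps = (?h - 1) * (1 + ?i)"
    by (simp add: exp_half_diff_fps_def algebra_simps flip: fps_exp_add_mult)
  have f2: "exp_half_diff_fps = (fps_exp 1 - 1) * ?i"
    by (simp add: exp_half_diff_fps_def left_diff_distrib flip: fps_exp_add_mult)
  have "(bernoulli_fps * (fps_exp 1 - 1)) oo (fps_const (1/2) * fps_X) = fps_const (1/2) * fps_X"
    by (simp add: bernoulli_fps_mult)
  then have half: "(bernoulli_fps oo (fps_const (1/2) * fps_X)) * (?h - 1) = fps_const (1/2) * fps_X"
    by (simp add: fps_compose_mult_distrib fps_compose_sub_distrib)
  have "bernoulli_half_fps * exp_half_diff_fps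
      = 2 * ((bernoulli_fps oo (fps_const (1/2) * fps_X)) * (?h - 1)) * (1 + ?i)
        - (bernoulli_fps * (fps_exp 1 - 1)) * ?i"
    unfolding bernoulli_half_fps_def left_diff_distrib
    by (subst (1) f1, subst f2) (simp only: mult.assoc)
  also have "\<dots> = (2 * fps_const (1/2)) * fps_X * (1 + ?i) - fps_X * ?i"
    unfolding half bernoulli_fps_mult by (simp only: mult.assoc)
  also have "2 * fps_const (1/2) = (1 :: complex fps)"
    by (simp add: numeral_fps_const flip: fps_const_mult)
  finally show ?thesis by (simp add: algebra_simps)
qed

lemma exp_half_diff_fps_neq_0: "exp_half_diff_fps \<noteq> 0"
proof
  assume "exp_half_diff_fps = 0"
  then have "fps_nth exp_half_diff_fps 1 = 0" by simp
  then show False by (simp add: exp_half_diff_fps_def)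
qed

lemma fps_nth_bernoulli_half_fps_odd:
  assumes "odd k"
  shows "fps_nth bernoulli_half_fps k = 0"
proof -
  let ?W = bernoulli_half_fps
  have "(?W oo - fps_X) * (exp_half_diff_fps oo - fps_X) = - fps_X"
    by (simp add: bernoulli_half_fps_mult flip: fps_compose_mult_distrib)
  moreover have "exp_half_diff_fps oo - fps_X = - exp_half_diff_fps"
    by (simp add: exp_half_diff_fps_def fps_compose_sub_distrib)
  ultimately have "(?W oo - fps_X) * exp_half_diff_fps = ?W * exp_half_diff_fps"
    by (simp add: bernoulli_half_fps_mult)
  then have "?W oo - fps_X = ?W"
    using exp_half_diff_fps_neq_0 by simp
  then have "(-1) ^ k * fps_nth ?W k = fps_nth ?W k"
    by (metis fps_compose_uminus' fps_nth_Abs_fps)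
  then show ?thesis using assms by simp
qed

definition xi_fps :: "complex fps" where
  "xi_fps = Abs_fps (\<lambda>n. of_real (if odd n then xi_neg n else 0) / fact n)"

lemma fps_nth_bernoulli_half_fps_Suc:
  "fps_nth bernoulli_half_fps (Suc n) = - fps_nth xi_fps n"
proof (cases "odd n")
  case True
  have "fps_nth bernoulli_half_fps (Suc n) = (2 * (1/2) ^ Suc n - 1) * fps_nth bernoulli_fps (Suc n)"
    by (simp add: bernoulli_half_fps_def numeral_fps_const left_diff_distrib)
  also have "\<dots> = of_real (((1/2) ^ n - 1) * (bernoulli_num (Suc n) / fact (Suc n)))"
    by (simp add: fps_nth_bernoulli_fps)
  also have "((1/2::real) ^ n - 1) * (bernoulli_num (Suc n) / fact (Suc n)) = - xi_neg n / fact n"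
    by (simp add: xi_neg_def zeta_neg_def powr_minus powr_realpow power_one_over field_simps
        del: of_nat_Suc)
  finally show ?thesis using True by (simp add: xi_fps_def)
next
  case False
  then show ?thesis by (simp add: fps_nth_bernoulli_half_fps_odd xi_fps_def)
qed

lemma fps_nth_bernoulli_half_fps_0: "fps_nth bernoulli_half_fps 0 = 1"
  by (simp add: bernoulli_half_fps_def fps_nth_bernoulli_fps bernoulli_num_def)

lemma inverse_exp_half_diff_laurent_expansion:
  "(\<lambda>u::complex. 1 / (exp (u/2) - exp (-u/2))) has_laurent_expansion fls_X_inv - fps_to_fls xi_fps"
proof -
  have "fps_to_fls exp_half_diff_fps * (fls_X_inv - fps_to_fls xi_fps)
      = fps_to_fls exp_half_diff_fps * (fls_X_inv * fps_to_fls bernoulli_half_fps)"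
  proof (rule arg_cong[where f = "(*) _"], rule fls_eqI)
    fix k :: int
    show "fls_nth (fls_X_inv - fps_to_fls xi_fps) k = fls_nth (fls_X_inv * fps_to_fls bernoulli_half_fps) k"
      by (cases "k < -1"; cases "k = -1")
         (auto simp: fls_X_inv_times_conv_shift fps_nth_bernoulli_half_fps_0
            fps_nth_bernoulli_half_fps_Suc nat_add_distrib)
  qed
  also have "\<dots> = fls_X_inv * fps_to_fls (bernoulli_half_fps * exp_half_diff_fps)"
    by (simp only: fls_times_fps_to_fls) (simp only: mult.commute mult.left_commute)
  also have "\<dots> = 1"
    by (simp add: bernoulli_half_fps_mult fls_X_inv_times_conv_shift)
  finally have "fps_to_fls exp_half_diff_fps * (fls_X_inv - fps_to_fls xi_fps) = 1" .
  then have inv: "inverse (fps_to_fls exp_half_diff_fps) = fls_X_inv - fps_to_fls xi_fps"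
    by (rule inverse_unique)
  have "(\<lambda>u. exp ((1/2) * u) - exp ((-1/2) * u)) has_fps_expansion exp_half_diff_fps"
    unfolding exp_half_diff_fps_def by (intro fps_expansion_intros)
  then have "(\<lambda>u. inverse (exp ((1/2) * u) - exp ((-1/2) * u)))
      has_laurent_expansion fls_X_inv - fps_to_fls xi_fps"
    unfolding inv[symmetric] by (intro has_laurent_expansion_inverse has_laurent_expansion_fps)
  then show ?thesis
    by (simp add: inverse_eq_divide)
qed

section \<open>The derivatives of V and the main theorem\<close>

lemma bernoulli_num_2: "bernoulli_num 2 = 1/6"
proof -
  define D :: "real fps" where "D = fps_shift 1 (fps_exp 1 - 1)"
  define b where "b = fps_nth (inverse D)"
  have "inverse D * D = 1" unfolding D_def by (rule inverse_mult_eq_1) simp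
  then have "fps_nth (inverse D * D) k = (if k = 0 then 1 else 0)" for k by simp
  moreover have "fps_nth D k = 1 / fact (Suc k)" for k by (simp add: D_def algebra_simps)
  ultimately have eq: "(\<Sum>i=0..k. b i / fact (Suc (k - i))) = (if k = 0 then 1 else 0)" for k
    by (simp add: fps_mult_nth b_def del: fact_Suc)
  have "b 2 = 1/12"
    using eq[of 0] eq[of 1] eq[of 2] by (simp add: numeral_2_eq_2 sum.atLeast0_atMost_Suc)
  then show ?thesis by (simp add: bernoulli_num_def b_def D_def)
qed

lemma xi_neg_1: "xi_neg 1 = 1/24"
  using bernoulli_num_2 by (simp add: xi_neg_def zeta_neg_def numeral_2_eq_2)

lemma norm_qexp_less_1: "0 < Im \<tau> \<Longrightarrow> norm (qexp \<tau>) < 1"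
  by (simp add: qexp_def)

lemma exp_p_fun_1_eq_qexp_power:
  assumes "lam \<in> partitions"
  shows "exp (2 * pi * \<i> * p_fun 1 lam * \<tau>) = qexp \<tau> ^ psize lam"
  unfolding p_fun_1_eq_psize[OF assms] qexp_def by (simp add: mult_ac flip: exp_of_nat_mult)

definition xi_factor :: "complex \<Rightarrow> complex" where
  "xi_factor \<tau> = exp (2 * pi * \<i> * (- xi_neg 1) * \<tau>)"

lemma V1_eq: "V1 \<tau> = xi_factor \<tau> * partition_gf (qexp \<tau>)"
proof -
  have "V1 \<tau> = (\<Sum>\<^sub>\<infinity>lam\<in>partitions. xi_factor \<tau> * qexp \<tau> ^ psize lam)"
    unfolding V1_def xi_factor_def by (intro infsum_cong) (simp only: exp_p_fun_1_eq_qexp_power)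
  then show ?thesis by (simp add: partition_gf_def infsum_cmult_right')
qed

lemma eta_mult_V1:
  assumes "0 < Im \<tau>"
  shows "eta \<tau> * V1 \<tau> = 1"
proof -
  have "exp (2 * pi * \<i> * \<tau> / 24) * xi_factor \<tau> = 1"
    unfolding xi_factor_def xi_neg_1 by (simp add: algebra_simps flip: exp_add)
  moreover have "partition_gf (qexp \<tau>) * (\<Prod>m. 1 - qexp \<tau> ^ Suc m) = 1"
    using partition_gf_euler_product[OF norm_qexp_less_1[OF assms]] .
  moreover have "eta \<tau> * V1 \<tau> = (exp (2 * pi * \<i> * \<tau> / 24) * xi_factor \<tau>)
      * (partition_gf (qexp \<tau>) * (\<Prod>m. 1 - qexp \<tau> ^ Suc m))"
    unfolding eta_def V1_eq by (simp only: mult_ac)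
  ultimately show ?thesis by simp
qed

definition partitions_of :: "nat \<Rightarrow> nat list set" where
  "partitions_of n = {lam \<in> partitions. psize lam = n}"

lemma finite_partitions_of: "finite (partitions_of n)"
proof (rule finite_subset)
  show "partitions_of n \<subseteq> {xs. set xs \<subseteq> {0..n} \<and> length xs \<le> n}"
    using length_le_psize by (auto simp: partitions_of_def psize_def member_le_sum_list)
  show "finite {xs. set xs \<subseteq> {0..n} \<and> length xs \<le> n}"
    by (rule finite_lists_length_le) simp
qed

lemma sums_card_partitions_of:
  fixes h :: "nat \<Rightarrow> complex"
  assumes "(\<lambda>lam. h (psize lam)) summable_on partitions"
  shows "(\<lambda>n. of_nat (card (partitions_of n)) * h n) sums (\<Sum>\<^sub>\<infinity>lam\<in>partitions. h (psize lam))"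
proof -
  have "((\<lambda>lam. h (psize lam)) has_sum (\<Sum>\<^sub>\<infinity>lam\<in>partitions. h (psize lam))) partitions"
    using assms by simp
  also have "?this \<longleftrightarrow> ((\<lambda>(n, lam). h n) has_sum (\<Sum>\<^sub>\<infinity>lam\<in>partitions. h (psize lam)))
      (Sigma UNIV partitions_of)"
    by (rule has_sum_reindex_bij_witness[where i = snd and j = "\<lambda>lam. (psize lam, lam)"])
       (auto simp: partitions_of_def)
  finally have "((\<lambda>n. of_nat (card (partitions_of n)) * h n)
      has_sum (\<Sum>\<^sub>\<infinity>lam\<in>partitions. h (psize lam))) UNIV"
    by (rule has_sum_SigmaD) (simp add: finite_partitions_of)
  then show ?thesis by (rule has_sum_imp_sums)
qed

definition partition_fps :: "complex fps" where
  "partition_fps = Abs_fps (\<lambda>n. of_nat (card (partitions_of n)))"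

lemma partition_fps_sums: "norm q < 1 \<Longrightarrow> (\<lambda>n. fps_nth partition_fps n * q ^ n) sums partition_gf q"
  using sums_card_partitions_of[of "\<lambda>n. q ^ n"] summable_on_power_psize[of q partitions]
  by (simp add: partition_fps_def partition_gf_def)

lemma fps_conv_radius_partition_fps: "1 \<le> fps_conv_radius partition_fps"
  unfolding fps_conv_radius_def
proof (rule conv_radius_geI_ex')
  fix r :: real assume "0 < r" "ereal r < 1"
  then show "summable (\<lambda>n. fps_nth partition_fps n * of_real r ^ n)"
    using partition_fps_sums[of "of_real r"] by (auto simp: sums_iff)
qed

lemma norm_less_fps_conv_radius_partition_fps:
  "norm q < 1 \<Longrightarrow> ereal (norm q) < fps_conv_radius partition_fps"
  by (rule less_le_trans[OF _ fps_conv_radius_partition_fps]) simp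

lemma eval_fps_partition_fps: "norm q < 1 \<Longrightarrow> eval_fps partition_fps q = partition_gf q"
  using partition_fps_sums by (simp add: eval_fps_def sums_iff)

lemma eval_fps_deriv_partition_fps:
  assumes q: "norm q < 1"
  shows "q * eval_fps (fps_deriv partition_fps) q = p_fun_gf q 1"
proof -
  have "(\<lambda>lam. of_nat (psize lam) * q ^ psize lam) summable_on partitions"
    using summable_on_p_fun_power_psize[OF q, of 1]
    by (rule summable_on_cong[THEN iffD1, rotated]) (simp only: p_fun_1_eq_psize of_real_of_nat_eq)
  moreover have "p_fun_gf q 1 = (\<Sum>\<^sub>\<infinity>lam\<in>partitions. of_nat (psize lam) * q ^ psize lam)"
    unfolding p_fun_gf_def by (intro infsum_cong) (simp only: p_fun_1_eq_psize of_real_of_nat_eq)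
  ultimately have "(\<lambda>n. of_nat (card (partitions_of n)) * (of_nat n * q ^ n)) sums p_fun_gf q 1"
    using sums_card_partitions_of[of "\<lambda>n. of_nat n * q ^ n"] by simp
  then have "(\<lambda>n. of_nat (card (partitions_of (Suc n))) * (of_nat (Suc n) * q ^ Suc n))
      sums p_fun_gf q 1"
    by (subst sums_Suc_iff) simp
  then have "(\<lambda>n. q * (fps_nth (fps_deriv partition_fps) n * q ^ n)) sums p_fun_gf q 1"
    by (simp add: partition_fps_def algebra_simps)
  moreover have "(\<lambda>n. fps_nth (fps_deriv partition_fps) n * q ^ n) sums eval_fps (fps_deriv partition_fps) q"
  proof (rule sums_eval_fps)
    have "ereal (norm q) < fps_conv_radius partition_fps"
      by (rule norm_less_fps_conv_radius_partition_fps[OF q])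
    also have "\<dots> \<le> fps_conv_radius (fps_deriv partition_fps)" by (rule fps_conv_radius_deriv)
    finally show "ereal (norm q) < fps_conv_radius (fps_deriv partition_fps)" .
  qed
  ultimately show ?thesis
    using sums_mult sums_unique2 by blast
qed

lemma has_field_derivative_V1:
  assumes "0 < Im \<tau>"
  shows "(V1 has_field_derivative 2 * pi * \<i> * xi_factor \<tau>
      * (p_fun_gf (qexp \<tau>) 1 - xi_neg 1 * partition_gf (qexp \<tau>))) (at \<tau>)"
proof -
  define q where "q = qexp \<tau>"
  have q: "norm q < 1" using norm_qexp_less_1[OF assms] by (simp add: q_def)
  have "(eval_fps partition_fps has_field_derivative eval_fps (fps_deriv partition_fps) q) (at q)"
    by (rule has_field_derivative_eval_fps[OF norm_less_fps_conv_radius_partition_fps[OF q]])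
  then have chain: "((\<lambda>t. eval_fps partition_fps (qexp t)) has_field_derivative
      eval_fps (fps_deriv partition_fps) q * (2 * pi * \<i> * q)) (at \<tau>)"
    unfolding q_def by (rule DERIV_chain2) (auto simp: qexp_def intro!: derivative_eq_intros)
  have "(xi_factor has_field_derivative 2 * pi * \<i> * (- xi_neg 1) * xi_factor \<tau>) (at \<tau>)"
    unfolding xi_factor_def by (auto intro!: derivative_eq_intros)
  from DERIV_mult[OF this chain]
  have "((\<lambda>t. xi_factor t * eval_fps partition_fps (qexp t)) has_field_derivative
      2 * pi * \<i> * xi_factor \<tau> * (p_fun_gf q 1 - xi_neg 1 * partition_gf q)) (at \<tau>)"
    by (rule DERIV_cong)
       (use eval_fps_deriv_partition_fps[OF q] in
         \<open>simp add: algebra_simps flip: q_def eval_fps_partition_fps[OF q]\<close>)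
  then show ?thesis unfolding q_def[symmetric]
  proof (rule has_field_derivative_transform_within_open[OF _ open_halfspace_Im_gt])
    show "\<tau> \<in> {z. 0 < Im z}" using assms by simp
    fix t assume "t \<in> {z. 0 < Im z}"
    then show "xi_factor t * eval_fps partition_fps (qexp t) = V1 t"
      by (simp add: V1_eq eval_fps_partition_fps norm_qexp_less_1)
  qed
qed

lemma dV_eq:
  assumes \<tau>: "0 < Im \<tau>" and n: "1 \<le> n"
  shows "dV n \<tau> = 2 * pi * \<i> * xi_factor \<tau>
    * (p_fun_gf (qexp \<tau>) n - (if odd n then xi_neg n else 0) * partition_gf (qexp \<tau>))"
proof (cases "n = 1")
  case True
  then show ?thesis
    using DERIV_imp_deriv[OF has_field_derivative_V1[OF \<tau>]] by (simp add: dV_def)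
next
  case False
  define q where "q = qexp \<tau>"
  define x :: complex where "x = of_real (if odd n then xi_neg n else 0)"
  have q: "norm q < 1" using norm_qexp_less_1[OF \<tau>] by (simp add: q_def)
  have "dV n \<tau> = (\<Sum>\<^sub>\<infinity>lam\<in>partitions.
      2 * pi * \<i> * xi_factor \<tau> * (of_real (p_fun n lam) * q ^ psize lam + - x * q ^ psize lam))"
    unfolding dV_def V_line_def if_not_P[OF False] fps_nth_Abs_fps
  proof (intro infsum_cong)
    fix lam assume lam: "lam \<in> partitions"
    show "fps_nth (fps_const (exp (2 * pi * \<i> * (- xi_neg 1) * \<tau>) * exp (2 * pi * \<i> * p_fun 1 lam * \<tau>))
        * fps_exp (2 * pi * \<i> * (p_fun n lam - (if odd n then xi_neg n else 0)))) 1
      = 2 * pi * \<i> * xi_factor \<tau> * (of_real (p_fun n lam) * q ^ psize lam + - x * q ^ psize lam)"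
      unfolding exp_p_fun_1_eq_qexp_power[OF lam] by (simp add: xi_factor_def x_def q_def algebra_simps)
  qed
  also have "\<dots> = 2 * pi * \<i> * xi_factor \<tau> * (p_fun_gf q n + - x * partition_gf q)"
    unfolding p_fun_gf_def partition_gf_def
    by (simp only: infsum_cmult_right' infsum_add[OF summable_on_p_fun_power_psize[OF q]
        summable_on_cmult_right[OF summable_on_power_psize[OF q order_refl]]])
  finally show ?thesis by (simp add: q_def x_def)
qed

lemma delta_V_eq:
  assumes \<tau>: "0 < Im \<tau>"
  shows "delta_V \<tau> = fls_X_inv - fps_to_fls xi_fps + fps_to_fls (bracket_fps (qexp \<tau>))"
proof -
  define q where "q = qexp \<tau>"
  have etaV: "eta \<tau> * V1 \<tau> = 1" by (rule eta_mult_V1[OF \<tau>])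
  then have P: "partition_gf q \<noteq> 0" by (auto simp: V1_eq q_def)
  have eta_xi: "eta \<tau> * xi_factor \<tau> = 1 / partition_gf q"
    using etaV P by (simp add: V1_eq q_def field_simps)
  have "Abs_fps (\<lambda>n. if n = 0 then 0 else eta \<tau> * dV n \<tau> / (2 * pi * \<i> * fact n))
      = bracket_fps q - xi_fps"
  proof (rule fps_ext)
    fix n
    show "fps_nth (Abs_fps (\<lambda>n. if n = 0 then 0 else eta \<tau> * dV n \<tau> / (2 * pi * \<i> * fact n))) n
        = fps_nth (bracket_fps q - xi_fps) n"
    proof (cases "n = 0")
      case True
      then show ?thesis by (simp add: bracket_fps_def p_fun_gf_def xi_fps_def p_fun_def)
    next
      case False
      define x :: complex where "x = of_real (if odd n then xi_neg n else 0)"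
      have "eta \<tau> * dV n \<tau> / (2 * pi * \<i> * fact n)
          = (eta \<tau> * xi_factor \<tau>) * (p_fun_gf q n - x * partition_gf q) / fact n"
        using dV_eq[OF \<tau>, of n] False by (simp add: q_def x_def)
      also have "\<dots> = p_fun_gf q n / (fact n * partition_gf q) - x / fact n"
        using P by (simp add: eta_xi field_simps)
      finally show ?thesis
        using False by (simp add: bracket_fps_def xi_fps_def x_def)
    qed
  qed
  then show ?thesis
    using etaV by (simp add: delta_V_def q_def)
qed

theorem proposition5p2:
  fixes \<tau>1 :: complex
  assumes "Im \<tau>1 > 0"
  shows "laurent_expansion (F_exp \<tau>1) 0 = delta_V \<tau>1"
proof -
  have F: "F_exp \<tau>1 = (\<lambda>u. 1 / (exp (u/2) - exp (-u/2)) + qbracket (qexp \<tau>1) (row_exp_sum u))"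
    by (rule ext) (simp only: F_exp_def row_exp_sum_def[abs_def])
  have "F_exp \<tau>1 has_laurent_expansion fls_X_inv - fps_to_fls xi_fps + fps_to_fls (bracket_fps (qexp \<tau>1))"
    unfolding F using norm_qexp_less_1[OF assms]
    by (intro has_laurent_expansion_add inverse_exp_half_diff_laurent_expansion
        has_laurent_expansion_fps has_fps_expansion_qbracket)
  then show ?thesis
    unfolding delta_V_eq[OF assms] by (rule laurent_expansion_0_eqI)
qed

end
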